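(* Let $f=0$ be a structurally nonsingular DAE in $x:\mathbb{R}\to\mathbb{R}^n$, let $(p,q)$ be an optimal solution to $(\mathrm{D}_f)$, let $J=J_f^{p,q}$ be the associated system Jacobian, and let $(U,V)$ be a pair of nonsingular constant matrices $U,V\in\mathbb{R}^{n\times n}$ with $\operatorname{trank}(UJV)<n$ such that $U$ is upper-triangular along $p$ and $V$ is upper-triangular along $q$. Define the DAE $f'=0$ in the new variable $y:\mathbb{R}\to\mathbb{R}^n$ by $f'(y,\dot y,\dots,t):=U(D_t)\,f\big(V(D_t)y,\,V(D_t)\dot y,\,\dots,\,V(D_t)y^{(k)},\,t\big)$, where $U(D_t)=\operatorname{diag}\{D_t^{-p_i}\}\,U\,\operatorname{diag}\{D_t^{p_i}\}$ and $V(D_t)=\operatorname{diag}\{D_t^{-q_i}\}\,V\,\operatorname{diag}\{D_t^{q_i}\}$. Then $\hat\delta_{f'}<\hat\delta_f$.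
   Context: A DAE is $f(x,\dot x,\dots,x^{(k)},t)=0$ with $f:\mathbb{R}^{n(k+1)+1}\to\mathbb{R}^n$ smooth. Its $\sigma$-function is $\sigma_f(i,j)=\max\{l\in\mathbb{Z}_{\ge0}:\partial f_i/\partial x_j^{(l)}\not\equiv0\}$ (with $\max\emptyset=-\infty$). $(\mathrm{D}_f)$ is the problem: minimize $\sum_j q_j-\sum_i p_i$ subject to $q_j-p_i\ge\sigma_f(i,j)$, $p_i,q_j\in\mathbb{Z}_{\ge0}$ for all $i,j\in[n]$; $\hat\delta_f$ is its optimal value ($-\infty$ if infeasible/unbounded), and $f=0$ is structurally nonsingular if $\hat\delta_f\neq-\infty$. For an optimal $(p,q)$, the system Jacobian is the functional matrix $J_f^{p,q}=\big(\partial f_i/\partial x_j^{(q_j-p_i)}\big)_{ij}$ (entries with $q_j-p_i$ not a valid derivative order are zero). The term-rank $\operatorname{trank}M$ is the maximum number of entries not identically zero with no two in a common row or column. A matrix $U$ is upper-triangular along an integer sequence $p$ if $U_{ij}=0$ whenever $p_i>p_j$. $D_t=\mathrm{d}/\mathrm{d}t$; by the triangularity assumptions all entries of $U(D_t),V(D_t)$ are polynomials in $D_t$, explicitly $(U(D_t)f)_i=\sum_k U_{ik}f_k^{(p_k-p_i)}$ and $(V(D_t)y^{(l)})_m=\sum_j V_{mj}y_j^{(q_j-q_m+l)}$. *)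

theory Defs
  imports "HOL-Analysis.Analysis"
begin

text \<open>A point of jet space: J l j is the value of the variable x_j^(l)
  (the l-th derivative of the j-th unknown). Equations and unknowns are both
  indexed by the finite type 'n, so n = CARD('n).\<close>

type_synonym 'n jet = "nat \<Rightarrow> 'n \<Rightarrow> real"
type_synonym 'n jet_fun = "'n jet \<Rightarrow> real \<Rightarrow> real"

definition jupd :: "'n jet \<Rightarrow> nat \<Rightarrow> 'n \<Rightarrow> real \<Rightarrow> 'n jet" where
  "jupd J l j s = J(l := (J l)(j := s))"

definition pdx :: "'n jet_fun \<Rightarrow> 'n \<Rightarrow> nat \<Rightarrow> 'n jet_fun" where
  "pdx g j l = (\<lambda>J t. deriv (\<lambda>s. g (jupd J l j s) t) (J l j))"

definition pdt :: "'n jet_fun \<Rightarrow> 'n jet_fun" where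
  "pdt g = (\<lambda>J t. deriv (\<lambda>s. g J s) t)"

definition jet_order :: "nat \<Rightarrow> 'n jet_fun \<Rightarrow> bool" where
  "jet_order k g \<longleftrightarrow> (\<forall>J J' t. (\<forall>l\<le>k. J l = J' l) \<longrightarrow> g J t = g J' t)"

text \<open>C^m: all partial derivatives up to order m exist and are continuous
  (continuity w.r.t. the product topology, which for functions depending on
  finitely many variables is ordinary continuity).\<close>
primrec smoothC :: "nat \<Rightarrow> 'n jet_fun \<Rightarrow> bool" where
  "smoothC 0 g = continuous_on UNIV (\<lambda>z. g (fst z) (snd z))"
| "smoothC (Suc m) g =
     (continuous_on UNIV (\<lambda>z. g (fst z) (snd z))
      \<and> (\<forall>j l J t. (\<lambda>s. g (jupd J l j s) t) differentiable (at (J l j)))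
      \<and> (\<forall>J t. (\<lambda>s. g J s) differentiable (at t))
      \<and> (\<forall>j l. smoothC m (pdx g j l))
      \<and> smoothC m (pdt g))"

definition smooth_jet :: "'n jet_fun \<Rightarrow> bool" where
  "smooth_jet g \<longleftrightarrow> (\<forall>m. smoothC m g)"

definition is_DAE :: "nat \<Rightarrow> ('n \<Rightarrow> 'n jet_fun) \<Rightarrow> bool" where
  "is_DAE k f \<longleftrightarrow> (\<forall>i. smooth_jet (f i) \<and> jet_order k (f i))"

definition sigma :: "('n \<Rightarrow> 'n jet_fun) \<Rightarrow> 'n \<Rightarrow> 'n \<Rightarrow> ereal" where
  "sigma f i j = (SUP l\<in>{l::nat. pdx (f i) j l \<noteq> (\<lambda>_ _. 0)}. ereal (real l))"

definition DP_feasible :: "('n \<Rightarrow> 'n jet_fun) \<Rightarrow> ('n \<Rightarrow> nat) \<Rightarrow> ('n \<Rightarrow> nat) \<Rightarrow> bool" where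
  "DP_feasible f p q \<longleftrightarrow>
     (\<forall>i j. ereal (real_of_int (int (q j) - int (p i))) \<ge> sigma f i j)"

definition DP_obj :: "('n::finite \<Rightarrow> nat) \<Rightarrow> ('n \<Rightarrow> nat) \<Rightarrow> int" where
  "DP_obj p q = (\<Sum>j\<in>UNIV. int (q j)) - (\<Sum>i\<in>UNIV. int (p i))"

definition DP_optimal :: "('n::finite \<Rightarrow> 'n jet_fun) \<Rightarrow> ('n \<Rightarrow> nat) \<Rightarrow> ('n \<Rightarrow> nat) \<Rightarrow> bool" where
  "DP_optimal f p q \<longleftrightarrow> DP_feasible f p q \<and>
     (\<forall>p' q'. DP_feasible f p' q' \<longrightarrow> DP_obj p q \<le> DP_obj p' q')"

text \<open>Optimal value of (D_f); -\<infinity> if infeasible or unbounded (i.e. no optimum).\<close>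
definition delta_hat :: "('n::finite \<Rightarrow> 'n jet_fun) \<Rightarrow> ereal" where
  "delta_hat f = (if \<exists>p q. DP_optimal f p q
      then ereal (real_of_int (THE v. \<exists>p q. DP_optimal f p q \<and> v = DP_obj p q))
      else -\<infinity>)"

definition sys_jacobian :: "('n \<Rightarrow> 'n jet_fun) \<Rightarrow> ('n \<Rightarrow> nat) \<Rightarrow> ('n \<Rightarrow> nat)
    \<Rightarrow> 'n \<Rightarrow> 'n \<Rightarrow> 'n jet_fun" where
  "sys_jacobian f p q i j = (if p i \<le> q j then pdx (f i) j (q j - p i) else (\<lambda>_ _. 0))"

definition fmat_mult3 :: "real^'n^'n \<Rightarrow> ('n::finite \<Rightarrow> 'n \<Rightarrow> 'n jet_fun) \<Rightarrow> real^'n^'n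
    \<Rightarrow> 'n \<Rightarrow> 'n \<Rightarrow> 'n jet_fun" where
  "fmat_mult3 U M V i j = (\<lambda>J t. \<Sum>a\<in>UNIV. \<Sum>b\<in>UNIV. U$i$a * M a b J t * V$b$j)"

definition trank :: "('n::finite \<Rightarrow> 'n \<Rightarrow> 'n jet_fun) \<Rightarrow> nat" where
  "trank M = Max {card S | S. (\<forall>(i,j)\<in>S. M i j \<noteq> (\<lambda>_ _. 0))
                              \<and> inj_on fst S \<and> inj_on snd S}"

definition upper_tri_along :: "real^'n^'n \<Rightarrow> ('n \<Rightarrow> nat) \<Rightarrow> bool" where
  "upper_tri_along U p \<longleftrightarrow> (\<forall>i j. p i > p j \<longrightarrow> U$i$j = 0)"

text \<open>Total time derivative D_t of a function of jet variables of order at most K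
  (chain rule: D_t g = dg/dt + sum_{j,l} dg/dx_j^(l) * x_j^(l+1)).\<close>
definition Dt :: "nat \<Rightarrow> 'n::finite jet_fun \<Rightarrow> 'n jet_fun" where
  "Dt K g = (\<lambda>J t. pdt g J t + (\<Sum>l\<le>K. \<Sum>j\<in>UNIV. pdx g j l J t * J (Suc l) j))"

primrec Dtpow :: "nat \<Rightarrow> nat \<Rightarrow> 'n::finite jet_fun \<Rightarrow> 'n jet_fun" where
  "Dtpow K 0 g = g"
| "Dtpow K (Suc r) g = Dt (K + r) (Dtpow K r g)"

text \<open>Substitution x = V(D_t) y on jets:
  (V(D_t) y^(l))_m = sum_j V_mj y_j^(q_j - q_m + l)
  (entries with q_m > q_j vanish by upper-triangularity of V along q).\<close>
definition Vsub :: "real^'n^'n \<Rightarrow> ('n::finite \<Rightarrow> nat) \<Rightarrow> 'n jet \<Rightarrow> 'n jet" where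
  "Vsub V q Y = (\<lambda>l m. \<Sum>j\<in>UNIV. if q m \<le> q j then V$m$j * Y (q j - q m + l) j else 0)"

text \<open>f'(y, y', ..., t) = U(D_t) f(V(D_t)y, V(D_t)y', ..., t), i.e.
  f'_i = sum_k U_ik D_t^(p_k - p_i) [f_k(V(D_t) y, ..., t)].
  The composed function has order at most k + max q.\<close>
definition transformed_DAE :: "nat \<Rightarrow> ('n::finite \<Rightarrow> 'n jet_fun) \<Rightarrow> real^'n^'n \<Rightarrow> real^'n^'n
    \<Rightarrow> ('n \<Rightarrow> nat) \<Rightarrow> ('n \<Rightarrow> nat) \<Rightarrow> 'n \<Rightarrow> 'n jet_fun" where
  "transformed_DAE k f U V p q i =
     (\<lambda>Y t. \<Sum>a\<in>UNIV. if p i \<le> p a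
        then U$i$a * Dtpow (k + Max (range q)) (p a - p i) (\<lambda>Y' t'. f a (Vsub V q Y') t') Y t
        else 0)"

end

theory Submission
  imports Defs
begin

(* Write f' for the transformed DAE. Since U(D_t) and V(D_t) raise derivative orders only along
  p and q, the component f'_i has order at most q_j - p_i in y_j, so (p, q) stays feasible for
  (D_f'). Differentiating f'_i with respect to y_j^(q_j - p_i), the highest derivative it may
  contain, the chain rule and the triangularity of U and V leave exactly the entry (U J V)_ij,
  evaluated at x = V(D_t) y.
  If (p, q) were also optimal for (D_f'), the bipartite graph of tight pairs
  sigma_f'(i, j) = q_j - p_i would have a perfect matching: otherwise a Hall-deficient set K of
  rows would allow raising p on K and q on the tight neighbours of K by one, lowering the
  objective. Every matched pair is a nonzero entry of U J V, so trank (U J V) = n, contradicting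
  the hypothesis. Hence (p, q) is feasible but not optimal for (D_f'), and delta_f' < delta_f. *)

section \<open>Hall's marriage theorem\<close>

definition Hall_condition :: "('a \<Rightarrow> 'b set) \<Rightarrow> 'a set \<Rightarrow> bool" where
  "Hall_condition A I \<longleftrightarrow> (\<forall>K\<subseteq>I. card K \<le> card (\<Union>(A ` K)))"

definition has_SDR :: "('a \<Rightarrow> 'b set) \<Rightarrow> 'a set \<Rightarrow> bool" where
  "has_SDR A I \<longleftrightarrow> (\<exists>f. inj_on f I \<and> (\<forall>i\<in>I. f i \<in> A i))"

lemma has_SDR_glue:
  assumes "K \<subseteq> I" and "has_SDR (\<lambda>i. A i \<inter> C) K" and "has_SDR (\<lambda>i. A i - C) (I - K)"
  shows "has_SDR A I"
proof -
  obtain f1 where f1: "inj_on f1 K" "\<forall>i\<in>K. f1 i \<in> A i \<inter> C"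
    using assms(2) unfolding has_SDR_def by blast
  obtain f2 where f2: "inj_on f2 (I - K)" "\<forall>i\<in>I - K. f2 i \<in> A i - C"
    using assms(3) unfolding has_SDR_def by blast
  define f where "f i = (if i \<in> K then f1 i else f2 i)" for i
  have "inj_on f K" using f1(1) by (simp add: f_def inj_on_def)
  moreover have "inj_on f (I - K)" using f2(1) by (simp add: f_def inj_on_def)
  moreover have "f ` K \<subseteq> C" "f ` (I - K) \<inter> C = {}" using f1(2) f2(2) by (auto simp: f_def)
  ultimately have "inj_on f (K \<union> (I - K))" unfolding inj_on_Un by blast
  moreover have "K \<union> (I - K) = I" using assms(1) by blast
  moreover have "\<forall>i\<in>I. f i \<in> A i" using f1(2) f2(2) by (auto simp: f_def)
  ultimately show ?thesis unfolding has_SDR_def by auto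
qed

lemma Hall_condition_remove_critical:
  assumes H: "Hall_condition A I" and "finite I" and K: "K \<subseteq> I" "card (\<Union>(A ` K)) = card K" "K \<noteq> {}"
  shows "Hall_condition (\<lambda>i. A i - \<Union>(A ` K)) (I - K)"
  unfolding Hall_condition_def
proof (intro allI impI)
  fix L assume L: "L \<subseteq> I - K"
  have "finite K" "finite L" using K(1) L \<open>finite I\<close> finite_subset by blast+
  then have "finite (\<Union>(A ` K))" using K(2,3) card_ge_0_finite by fastforce
  have "\<Union>((\<lambda>i. A i - \<Union>(A ` K)) ` L) = \<Union>(A ` (L \<union> K)) - \<Union>(A ` K)" by auto
  then have "card (\<Union>((\<lambda>i. A i - \<Union>(A ` K)) ` L)) = card (\<Union>(A ` (L \<union> K))) - card K"
    using \<open>finite (\<Union>(A ` K))\<close> K(2) by (simp add: card_Diff_subset)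
  moreover have "card (L \<union> K) \<le> card (\<Union>(A ` (L \<union> K)))"
    using H L K(1) unfolding Hall_condition_def by blast
  moreover have "card (L \<union> K) = card L + card K"
    using L \<open>finite K\<close> \<open>finite L\<close> by (subst card_Un_disjoint) auto
  ultimately show "card L \<le> card (\<Union>((\<lambda>i. A i - \<Union>(A ` K)) ` L))" by linarith
qed

lemma Hall_condition_remove_surplus:
  assumes H: "Hall_condition A I"
    and surplus: "\<And>K. K \<subseteq> I \<Longrightarrow> K \<noteq> {} \<Longrightarrow> K \<noteq> I \<Longrightarrow> card K < card (\<Union>(A ` K))"
    and "i0 \<in> I"
  shows "Hall_condition (\<lambda>i. A i - {c}) (I - {i0})"
  unfolding Hall_condition_def
proof (intro allI impI)
  fix L assume L: "L \<subseteq> I - {i0}"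
  show "card L \<le> card (\<Union>((\<lambda>i. A i - {c}) ` L))"
  proof (cases "L = {}")
    case False
    have "L \<subseteq> I" "L \<noteq> I" using L \<open>i0 \<in> I\<close> by auto
    then have "card L < card (\<Union>(A ` L))" using surplus False by blast
    then have "card L \<le> card (\<Union>(A ` L)) - 1" by linarith
    also have "\<dots> \<le> card (\<Union>(A ` L) - {c})"
      using diff_card_le_card_Diff[of "{c}" "\<Union>(A ` L)"] by simp
    also have "\<dots> = card (\<Union>((\<lambda>i. A i - {c}) ` L))" by (rule arg_cong[where f = card]) auto
    finally show ?thesis .
  qed simp
qed

theorem Hall_marriage:
  assumes "finite I" and "Hall_condition A I"
  shows "has_SDR A I"
  using assms
proof (induction "card I" arbitrary: I A rule: less_induct)
  case less
  show ?case
  proof (cases "\<exists>K. K \<subseteq> I \<and> K \<noteq> {} \<and> K \<noteq> I \<and> card (\<Union>(A ` K)) = card K")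
    case True
    then obtain K where K: "K \<subseteq> I" "K \<noteq> {}" "K \<noteq> I" "card (\<Union>(A ` K)) = card K" by blast
    have "finite K" using K(1) less.prems(1) finite_subset by blast
    have "card K < card I" "card (I - K) < card I"
      using K less.prems(1) \<open>finite K\<close> by (auto intro: psubset_card_mono card_Diff_subset)
    have "\<Union>((\<lambda>i. A i \<inter> \<Union>(A ` K)) ` L) = \<Union>(A ` L)" if "L \<subseteq> K" for L
      using that by auto
    moreover have "card L \<le> card (\<Union>(A ` L))" if "L \<subseteq> K" for L
      using that less.prems(2) K(1) unfolding Hall_condition_def by blast
    ultimately have "Hall_condition (\<lambda>i. A i \<inter> \<Union>(A ` K)) K"
      unfolding Hall_condition_def by simp
    then have "has_SDR (\<lambda>i. A i \<inter> \<Union>(A ` K)) K"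
      using less.hyps \<open>card K < card I\<close> \<open>finite K\<close> by blast
    moreover have "has_SDR (\<lambda>i. A i - \<Union>(A ` K)) (I - K)"
      using less.hyps less.prems Hall_condition_remove_critical[OF less.prems(2,1) K(1,4,2)]
        \<open>card (I - K) < card I\<close> by blast
    ultimately show ?thesis using has_SDR_glue K(1) by blast
  next
    case False
    show ?thesis
    proof (cases "I = {}")
      case False
      then obtain i0 where "i0 \<in> I" by blast
      then have "card {i0} \<le> card (A i0)" using less.prems(2) unfolding Hall_condition_def by force
      then obtain c where "c \<in> A i0" by fastforce
      have surplus: "card K < card (\<Union>(A ` K))" if "K \<subseteq> I" "K \<noteq> {}" "K \<noteq> I" for K
        using that \<open>\<not> (\<exists>K. _)\<close> less.prems(2) unfolding Hall_condition_def
        by (metis le_neq_implies_less)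
      have "card (I - {i0}) < card I" using less.prems(1) \<open>i0 \<in> I\<close> by (rule card_Diff1_less)
      then have "has_SDR (\<lambda>i. A i - {c}) (I - {i0})"
        using less.hyps less.prems(1) Hall_condition_remove_surplus[OF less.prems(2) surplus \<open>i0 \<in> I\<close>]
        by blast
      moreover have "has_SDR (\<lambda>i. A i \<inter> {c}) {i0}"
        using \<open>c \<in> A i0\<close> unfolding has_SDR_def by auto
      ultimately show ?thesis using has_SDR_glue[of "{i0}" I A "{c}"] \<open>i0 \<in> I\<close> by simp
    qed (simp add: has_SDR_def)
  qed
qed

section \<open>The dual problem\<close>

lemma sigma_ge:
  assumes "pdx (f i) j l \<noteq> (\<lambda>_ _. 0)"
  shows "ereal (real l) \<le> sigma f i j"
  unfolding sigma_def using assms by (auto intro: SUP_upper)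

lemma sigma_finite_attained:
  assumes "sigma f i j = ereal r"
  obtains l where "pdx (f i) j l \<noteq> (\<lambda>_ _. 0)" and "r = real l"
proof -
  define S where "S = {l. pdx (f i) j l \<noteq> (\<lambda>_ _. 0)}"
  have sigma_S: "sigma f i j = (SUP l\<in>S. ereal (real l))" unfolding sigma_def S_def ..
  have "S \<noteq> {}"
    using assms unfolding sigma_S by (auto simp: bot_ereal_def)
  moreover have "S \<subseteq> {..nat \<lfloor>r\<rfloor>}"
  proof
    fix l assume "l \<in> S"
    then have "ereal (real l) \<le> ereal r" using sigma_ge[of f i j l] assms unfolding S_def by simp
    then show "l \<in> {..nat \<lfloor>r\<rfloor>}" by (simp add: le_nat_iff le_floor_iff)
  qed
  then have "finite S" by (rule finite_subset) simp
  ultimately have "(SUP l\<in>S. ereal (real l)) \<in> (\<lambda>l. ereal (real l)) ` S"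
    by (metis (no_types, lifting) Max_Sup Max_in finite_imageI image_is_empty)
  then show ?thesis using that assms unfolding sigma_S S_def by auto
qed

lemma sigma_less_imp_le_minus_one:
  assumes "sigma f i j < ereal (real_of_int c)"
  shows "sigma f i j \<le> ereal (real_of_int (c - 1))"
proof (cases "sigma f i j")
  case (real r)
  then obtain l where "r = real l" by (rule sigma_finite_attained)
  then have "int l < c" using assms real by simp
  then show ?thesis using real \<open>r = real l\<close> by simp
qed (use assms in auto)

lemma delta_hat_eq_DP_obj:
  assumes "DP_optimal f p q"
  shows "delta_hat f = ereal (real_of_int (DP_obj p q))"
proof -
  have "(THE v. \<exists>p q. DP_optimal f p q \<and> v = DP_obj p q) = DP_obj p q"
  proof (rule the_equality)
    fix v assume "\<exists>p' q'. DP_optimal f p' q' \<and> v = DP_obj p' q'"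
    then show "v = DP_obj p q" using assms unfolding DP_optimal_def by (meson order_antisym)
  qed (use assms in blast)
  then show ?thesis unfolding delta_hat_def using assms by auto
qed

lemma delta_hat_less_DP_obj:
  assumes "DP_feasible f p q" and "\<not> DP_optimal f p q"
  shows "delta_hat f < ereal (real_of_int (DP_obj p q))"
proof (cases "\<exists>p' q'. DP_optimal f p' q'")
  case True
  then obtain p' q' where opt: "DP_optimal f p' q'" by blast
  then have "DP_obj p' q' < DP_obj p q"
    using assms unfolding DP_optimal_def by (meson not_less order_trans)
  then show ?thesis unfolding delta_hat_eq_DP_obj[OF opt] by simp
qed (simp add: delta_hat_def)

definition DP_tight :: "('n \<Rightarrow> 'n jet_fun) \<Rightarrow> ('n \<Rightarrow> nat) \<Rightarrow> ('n \<Rightarrow> nat) \<Rightarrow> 'n \<Rightarrow> 'n \<Rightarrow> bool"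
  where
  "DP_tight f p q i j \<longleftrightarrow> sigma f i j = ereal (real_of_int (int (q j) - int (p i)))"

lemma DP_tight_imp_pdx_nonzero:
  assumes "DP_tight f p q i j"
  shows "p i \<le> q j" and "pdx (f i) j (q j - p i) \<noteq> (\<lambda>_ _. 0)"
proof -
  obtain l where l: "pdx (f i) j l \<noteq> (\<lambda>_ _. 0)" "real_of_int (int (q j) - int (p i)) = real l"
    using assms unfolding DP_tight_def by (rule sigma_finite_attained)
  then have "int l = int (q j) - int (p i)" by (metis of_int_eq_iff of_int_of_nat_eq)
  then have "p i \<le> q j" and "l = q j - p i" by linarith+
  with l(1) show "p i \<le> q j" and "pdx (f i) j (q j - p i) \<noteq> (\<lambda>_ _. 0)" by simp_all
qed

lemma DP_obj_shift:
  "DP_obj (\<lambda>i. p i + of_bool (i \<in> K)) (\<lambda>j. q j + of_bool (j \<in> N))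
     = DP_obj p q + int (card N) - int (card K)"
  by (simp add: DP_obj_def sum.distrib)

lemma DP_feasible_shift:
  assumes fe: "DP_feasible f p q"
    and closed: "\<And>i j. i \<in> K \<Longrightarrow> DP_tight f p q i j \<Longrightarrow> j \<in> N"
  shows "DP_feasible f (\<lambda>i. p i + of_bool (i \<in> K)) (\<lambda>j. q j + of_bool (j \<in> N))"
  unfolding DP_feasible_def
proof (intro allI)
  fix i j
  define c where "c = int (q j) - int (p i)"
  have le: "sigma f i j \<le> ereal (real_of_int c)" using fe unfolding DP_feasible_def c_def by blast
  show "sigma f i j \<le> ereal (real_of_int (int (q j + of_bool (j \<in> N)) - int (p i + of_bool (i \<in> K))))"
  proof (cases "i \<in> K \<and> j \<notin> N")
    case True
    then have "sigma f i j \<noteq> ereal (real_of_int c)" using closed unfolding DP_tight_def c_def by blast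
    with le have "sigma f i j < ereal (real_of_int c)" by (rule le_neq_trans)
    then have "sigma f i j \<le> ereal (real_of_int (c - 1))" by (rule sigma_less_imp_le_minus_one)
    moreover have "c - 1 = int (q j + of_bool (j \<in> N)) - int (p i + of_bool (i \<in> K))"
      using True by (simp add: c_def)
    ultimately show ?thesis by simp
  next
    case False
    then have "c \<le> int (q j + of_bool (j \<in> N)) - int (p i + of_bool (i \<in> K))" by (auto simp: c_def)
    then have "ereal (real_of_int c)
        \<le> ereal (real_of_int (int (q j + of_bool (j \<in> N)) - int (p i + of_bool (i \<in> K))))"
      by (simp only: ereal_less_eq of_int_le_iff)
    with le show ?thesis by (rule order_trans)
  qed
qed

lemma DP_optimal_imp_tight_perfect_matching:
  fixes f :: "'n::finite \<Rightarrow> 'n jet_fun"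
  assumes opt: "DP_optimal f p q"
  obtains \<pi> where "inj \<pi>" and "\<And>i. DP_tight f p q i (\<pi> i)"
proof -
  define A where "A i = {j. DP_tight f p q i j}" for i
  have "Hall_condition A UNIV"
    unfolding Hall_condition_def
  proof (rule ccontr)
    assume "\<not> (\<forall>K\<subseteq>UNIV. card K \<le> card (\<Union>(A ` K)))"
    then obtain K where K: "card (\<Union>(A ` K)) < card K" by (auto simp: not_le)
    have "DP_feasible f (\<lambda>i. p i + of_bool (i \<in> K)) (\<lambda>j. q j + of_bool (j \<in> \<Union>(A ` K)))"
      using opt unfolding DP_optimal_def by (intro DP_feasible_shift) (auto simp: A_def)
    then have "DP_obj p q \<le> DP_obj p q + int (card (\<Union>(A ` K))) - int (card K)"
      using opt unfolding DP_optimal_def DP_obj_shift[symmetric] by blast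
    then show False using K by simp
  qed
  then show ?thesis
    using Hall_marriage[of UNIV A] that unfolding has_SDR_def A_def by auto
qed

lemma CARD_le_trank:
  fixes M :: "'n::finite \<Rightarrow> 'n \<Rightarrow> 'n jet_fun"
  assumes "inj \<pi>" and "\<And>i. M i (\<pi> i) \<noteq> (\<lambda>_ _. 0)"
  shows "CARD('n) \<le> trank M"
proof -
  define S where "S = range (\<lambda>i. (i, \<pi> i))"
  define T where "T = {card S | S. (\<forall>(i, j)\<in>S. M i j \<noteq> (\<lambda>_ _. 0)) \<and> inj_on fst S \<and> inj_on snd S}"
  have "card S \<in> T"
    using assms unfolding S_def T_def by (auto simp: inj_on_def inj_def)
  moreover have "finite T"
    unfolding T_def by (rule finite_subset[of _ "card ` Pow UNIV"]) auto
  moreover have "card S = CARD('n)"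
    unfolding S_def by (rule card_image) (simp add: inj_on_def)
  ultimately show ?thesis unfolding trank_def T_def[symmetric] by (metis Max_ge)
qed

section \<open>Functions on jet space\<close>

lemma jupd_same [simp]: "jupd Y l j (Y l j) = Y"
  unfolding jupd_def by auto

lemma jupd_at [simp]: "jupd Y l j s l j = s"
  unfolding jupd_def by simp

lemma jupd_apply: "jupd Y l j s l' j' = (if l' = l \<and> j' = j then s else Y l' j')"
  unfolding jupd_def by auto

lemma jupd_jupd_same [simp]: "jupd (jupd Y l j s) l j s' = jupd Y l j s'"
  unfolding jupd_def by auto

lemma jupd_commute:
  "(l, j) \<noteq> (l', j') \<Longrightarrow> jupd (jupd Y l j s) l' j' s' = jupd (jupd Y l' j' s') l j s"
  unfolding jupd_def by (auto simp: fun_eq_iff)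

definition jet_indep :: "'n jet_fun \<Rightarrow> 'n \<Rightarrow> nat \<Rightarrow> bool" where
  "jet_indep g j l \<longleftrightarrow> (\<forall>Y t s. g (jupd Y l j s) t = g Y t)"

lemma pdx_eq_0_if_jet_indep: "jet_indep g j l \<Longrightarrow> pdx g j l Y t = 0"
  unfolding jet_indep_def pdx_def by simp

lemma jet_indep_pdx:
  assumes "jet_indep g j l"
  shows "jet_indep (pdx g j' l') j l"
  unfolding jet_indep_def
proof (intro allI)
  fix Y t s
  show "pdx g j' l' (jupd Y l j s) t = pdx g j' l' Y t"
  proof (cases "(l, j) = (l', j')")
    case True
    then show ?thesis using pdx_eq_0_if_jet_indep[OF assms] by auto
  next
    case False
    then have "g (jupd (jupd Y l j s) l' j' s') t = g (jupd Y l' j' s') t" for s'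
      using assms unfolding jet_indep_def by (metis jupd_commute)
    moreover have "jupd Y l j s l' j' = Y l' j'" using False by (auto simp: jupd_apply)
    ultimately show ?thesis unfolding pdx_def by simp
  qed
qed

lemma jet_indep_pdt:
  assumes "jet_indep g j l"
  shows "jet_indep (pdt g) j l"
proof -
  have "g (jupd Y l j s) = g Y" for Y s using assms unfolding jet_indep_def by blast
  then show ?thesis unfolding jet_indep_def pdt_def by simp
qed

lemma jet_indep_Dt:
  assumes "jet_indep g j L" and "\<And>l. L = Suc l \<Longrightarrow> l \<le> K \<Longrightarrow> jet_indep g j l"
  shows "jet_indep (Dt K g) j L"
  unfolding jet_indep_def
proof (intro allI)
  fix Y t s
  have "pdx g j' l (jupd Y L j s) t * jupd Y L j s (Suc l) j' = pdx g j' l Y t * Y (Suc l) j'"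
    if "l \<le> K" for l j'
    using jet_indep_pdx[OF assms(1)] pdx_eq_0_if_jet_indep[OF assms(2)] that
    by (auto simp: jet_indep_def jupd_apply)
  moreover have "pdt g (jupd Y L j s) t = pdt g Y t"
    using jet_indep_pdt[OF assms(1)] unfolding jet_indep_def by blast
  ultimately show "Dt K g (jupd Y L j s) t = Dt K g Y t"
    unfolding Dt_def by simp
qed

lemma Dt_jupd_leading:
  assumes "jet_indep g j (Suc l)" and "l \<le> K"
  shows "Dt K g (jupd Y (Suc l) j s) t = Dt K g Y t + pdx g j l Y t * (s - Y (Suc l) j)"
proof -
  have pdx_upd: "pdx g j' l' (jupd Y (Suc l) j s) t = pdx g j' l' Y t" for j' l'
    using jet_indep_pdx[OF assms(1)] unfolding jet_indep_def by blast
  have "pdx g j' l' Y t * jupd Y (Suc l) j s (Suc l') j'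
      = pdx g j' l' Y t * Y (Suc l') j' + (if l' = l then if j' = j then pdx g j l Y t * (s - Y (Suc l) j) else 0 else 0)"
    for l' j'
    by (auto simp: jupd_apply algebra_simps)
  moreover have "(\<Sum>j'\<in>UNIV. if l' = l then if j' = j then c else 0 else 0) = (if l' = l then c else 0)"
    for l' and c :: real
    by (cases "l' = l") simp_all
  ultimately have "(\<Sum>l'\<le>K. \<Sum>j'\<in>UNIV. pdx g j' l' (jupd Y (Suc l) j s) t * jupd Y (Suc l) j s (Suc l') j')
      = (\<Sum>l'\<le>K. \<Sum>j'\<in>UNIV. pdx g j' l' Y t * Y (Suc l') j') + pdx g j l Y t * (s - Y (Suc l) j)"
    using assms(2) by (simp add: pdx_upd sum.distrib)
  moreover have "pdt g (jupd Y (Suc l) j s) t = pdt g Y t"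
    using jet_indep_pdt[OF assms(1)] unfolding jet_indep_def by blast
  ultimately show ?thesis unfolding Dt_def by simp
qed

definition jet_orders_le :: "'n jet_fun \<Rightarrow> ('n \<Rightarrow> int) \<Rightarrow> bool" where
  "jet_orders_le g d \<longleftrightarrow> (\<forall>j l. d j < int l \<longrightarrow> jet_indep g j l)"

lemma jet_orders_le_Dt:
  assumes "jet_orders_le g d"
  shows "jet_orders_le (Dt K g) (\<lambda>j. d j + 1)"
  using assms by (auto simp: jet_orders_le_def intro!: jet_indep_Dt)

lemma jet_orders_le_Dtpow:
  assumes "jet_orders_le g d"
  shows "jet_orders_le (Dtpow K r g) (\<lambda>j. d j + int r)"
proof (induction r)
  case (Suc r)
  then show ?case using jet_orders_le_Dt[OF Suc.IH, of "K + r"] by (simp add: algebra_simps)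
qed (use assms in simp)

lemma jet_indep_Dtpow:
  assumes "\<And>l. jet_indep g j l"
  shows "jet_indep (Dtpow K r g) j l"
proof (induction r arbitrary: l)
  case (Suc r)
  then show ?case by (simp add: jet_indep_Dt)
qed (use assms in simp)

lemma Dtpow_leading_deriv:
  assumes "jet_orders_le g d" and "d j = int l" and "l \<le> K"
    and g_deriv: "\<And>Y t. ((\<lambda>s. g (jupd Y l j s) t) has_real_derivative c Y t) (at (Y l j))"
  shows "((\<lambda>s. Dtpow K r g (jupd Y (l + r) j s) t) has_real_derivative c Y t) (at (Y (l + r) j))"
proof (induction r arbitrary: Y t)
  case (Suc r)
  have "jet_indep (Dtpow K r g) j (Suc (l + r))"
    using jet_orders_le_Dtpow[OF assms(1)] assms(2) unfolding jet_orders_le_def by simp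
  moreover have "pdx (Dtpow K r g) j (l + r) Y t = c Y t"
    unfolding pdx_def using Suc.IH by (rule DERIV_imp_deriv)
  ultimately have "Dtpow K (Suc r) g (jupd Y (l + Suc r) j s) t
      = Dtpow K (Suc r) g Y t + c Y t * (s - Y (l + Suc r) j)" for s
    using Dt_jupd_leading[of "Dtpow K r g" j "l + r" "K + r"] assms(3) by simp
  then show ?case by (auto intro!: derivative_eq_intros)
qed (use g_deriv in simp)

lemma sigma_le_if_jet_orders_le:
  assumes "jet_orders_le (f i) d"
  shows "sigma f i j \<le> ereal (real_of_int (d j))"
  unfolding sigma_def
proof (rule SUP_least)
  fix l assume "l \<in> {l. pdx (f i) j l \<noteq> (\<lambda>_ _. 0)}"
  then have "\<not> jet_indep (f i) j l" using pdx_eq_0_if_jet_indep[of "f i" j l] by (auto simp: fun_eq_iff)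
  then have "int l \<le> d j" using assms unfolding jet_orders_le_def by (meson not_le)
  then show "ereal (real l) \<le> ereal (real_of_int (d j))" by simp
qed

lemma smoothC1_has_pdx:
  assumes "smoothC (Suc 0) g"
  shows "((\<lambda>s. g (jupd J l j s) t) has_real_derivative pdx g j l J t) (at (J l j))"
  using assms unfolding pdx_def by (simp add: DERIV_deriv_iff_real_differentiable)

lemma jet_orders_le_if_sigma_le:
  assumes "smoothC (Suc 0) (f i)" and "\<And>j. sigma f i j \<le> ereal (real_of_int (d j))"
  shows "jet_orders_le (f i) d"
  unfolding jet_orders_le_def jet_indep_def
proof (intro allI impI)
  fix j l Y t s assume "d j < int l"
  have "pdx (f i) j l = (\<lambda>_ _. 0)"
  proof (rule ccontr)
    assume "pdx (f i) j l \<noteq> (\<lambda>_ _. 0)"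
    then have "ereal (real l) \<le> sigma f i j" by (rule sigma_ge)
    also have "\<dots> \<le> ereal (real_of_int (d j))" by (rule assms(2))
    finally show False using \<open>d j < int l\<close> by simp
  qed
  then have "((\<lambda>s. f i (jupd Y l j s) t) has_real_derivative 0) (at x)" for x
    using smoothC1_has_pdx[OF assms(1), of "jupd Y l j x" l j t] by simp
  then show "f i (jupd Y l j s) t = f i Y t"
    using DERIV_isconst_all[of "\<lambda>s. f i (jupd Y l j s) t" s "Y l j"] by simp
qed

section \<open>A chain rule along lines in jet space\<close>

lemma DERIV_diagonal_from_partials:
  fixes F :: "real \<Rightarrow> real \<Rightarrow> real"
  assumes Fx: "((\<lambda>x. F x 0) has_real_derivative D) (at 0)"
    and Fy: "\<And>x y. ((\<lambda>y. F x y) has_real_derivative P x y) (at y)"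
    and P_cont: "continuous (at (0, 0)) (\<lambda>z. P (fst z) (snd z))"
  shows "((\<lambda>h. F h (h * c)) has_real_derivative D + c * P 0 0) (at 0)"
proof -
  have "continuous (at (0, 0)) (\<lambda>z. blinfun_mult_left (P (fst z) (snd z)))"
    using P_cont by (rule bounded_linear.continuous[OF bounded_linear_blinfun_mult_left])
  then have "continuous (at (0, 0) within UNIV \<times> UNIV) (\<lambda>(x, y). blinfun_mult_left (P x y))"
    by (simp add: case_prod_beta')
  moreover have "((\<lambda>x. F x 0) has_derivative (*) D) (at 0 within UNIV)"
    using Fx by (simp add: has_field_derivative_def)
  moreover have "((\<lambda>y. F x y) has_derivative blinfun_mult_left (P x y)) (at y within UNIV)" for x y
    using Fy[of x y] by (simp add: has_field_derivative_def mult_commute_abs)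
  ultimately have "((\<lambda>(x, y). F x y) has_derivative (\<lambda>(u, v). D * u + blinfun_mult_left (P 0 0) v))
      (at (0, 0) within UNIV \<times> UNIV)"
    by (intro has_derivative_partialsI) auto
  then have F: "((\<lambda>z. F (fst z) (snd z)) has_derivative (\<lambda>z. D * fst z + snd z * P 0 0))
      (at ((\<lambda>h. (h, h * c)) 0))"
    by (simp add: case_prod_beta')
  have diag: "((\<lambda>h. (h, h * c)) has_derivative (\<lambda>h. (h, h * c))) (at (0::real))"
    by (auto intro!: derivative_eq_intros)
  have "(\<lambda>h. D * h + h * c * P 0 0) = (*) (D + c * P 0 0)"
    by (auto simp: fun_eq_iff algebra_simps)
  then show ?thesis
    using diff_chain_at[OF diag F] by (simp add: has_field_derivative_def o_def)
qed

definition jet_add :: "'n jet \<Rightarrow> 'n set \<Rightarrow> ('n \<Rightarrow> nat) \<Rightarrow> ('n \<Rightarrow> real) \<Rightarrow> 'n jet" where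
  "jet_add X M lv \<delta> = (\<lambda>l m. X l m + (if m \<in> M \<and> l = lv m then \<delta> m else 0))"

lemma jet_add_insert:
  "m0 \<notin> M \<Longrightarrow>
    jet_add X (insert m0 M) lv \<delta> = jupd (jet_add X M lv \<delta>) (lv m0) m0 (X (lv m0) m0 + \<delta> m0)"
  unfolding jet_add_def jupd_def by (auto simp: fun_eq_iff)

lemma jet_add_jet_indep:
  assumes "finite M" and "\<forall>m\<in>M. jet_indep g m (lv m)"
  shows "g (jet_add X M lv \<delta>) t = g X t"
  using assms
proof (induction M rule: finite_induct)
  case empty
  then show ?case by (simp add: jet_add_def)
next
  case (insert m0 M)
  then show ?case unfolding jet_add_insert[OF insert(2)] jet_indep_def by simp
qed

lemma continuous_on_jet_add:
  assumes "\<And>m. continuous_on S (\<lambda>z. \<delta> z m)"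
  shows "continuous_on S (\<lambda>z. jet_add X M lv (\<delta> z))"
  unfolding jet_add_def
proof (intro continuous_on_coordinatewise_then_product)
  fix l m
  show "continuous_on S (\<lambda>z. X l m + (if m \<in> M \<and> l = lv m then \<delta> z m else 0))"
    by (cases "m \<in> M \<and> l = lv m") (auto intro!: continuous_intros assms)
qed

lemma continuous_on_pdx_comp:
  assumes "smoothC (Suc 0) g" and "continuous_on UNIV \<Phi>"
  shows "continuous_on UNIV (\<lambda>z. pdx g j l (\<Phi> z) t)"
proof -
  have "continuous_on UNIV (\<lambda>z. (\<Phi> z, t))"
    using assms(2) by (intro continuous_on_Pair continuous_on_const)
  moreover have "continuous_on UNIV (\<lambda>z. pdx g j l (fst z) (snd z))"
    using assms(1) by simp
  ultimately show ?thesis using continuous_on_compose2 by fastforce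
qed

lemma DERIV_jet_add_line_insert:
  assumes g: "smoothC (Suc 0) g" and "m0 \<notin> M"
    and IH: "((\<lambda>h. g (jet_add X M lv (\<lambda>m. h * w m)) t) has_real_derivative D) (at 0)"
  shows "((\<lambda>h. g (jet_add X (insert m0 M) lv (\<lambda>m. h * w m)) t) has_real_derivative
      D + w m0 * pdx g m0 (lv m0) X t) (at 0)"
proof -
  define J where "J x y = jet_add X (insert m0 M) lv (\<lambda>m. if m = m0 then y else x * w m)" for x y
  define P where "P x y = pdx g m0 (lv m0) (J x y) t" for x y
  have J_upd: "J x y = jupd (jet_add X M lv (\<lambda>m. x * w m)) (lv m0) m0 (X (lv m0) m0 + y)" for x y
    unfolding J_def jet_add_insert[OF \<open>m0 \<notin> M\<close>] using \<open>m0 \<notin> M\<close>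
    by (auto simp: jet_add_def jupd_def fun_eq_iff)
  have "J x 0 = jet_add X M lv (\<lambda>m. x * w m)" for x
  proof -
    have "X (lv m0) m0 = jet_add X M lv (\<lambda>m. x * w m) (lv m0) m0"
      using \<open>m0 \<notin> M\<close> by (simp add: jet_add_def)
    then show ?thesis unfolding J_upd by (metis add_0_right jupd_same)
  qed
  then have "((\<lambda>x. g (J x 0) t) has_real_derivative D) (at 0)"
    using IH by simp
  moreover have "((\<lambda>y. g (J x y) t) has_real_derivative P x y) (at y)" for x y
  proof -
    have outer: "((\<lambda>s. g (jupd (J x y) (lv m0) m0 s) t) has_real_derivative P x y)
        (at (X (lv m0) m0 + y))"
      using smoothC1_has_pdx[OF g, of "J x y" "lv m0" m0 t] unfolding P_def J_upd by simp
    have inner: "((\<lambda>y'. X (lv m0) m0 + y') has_real_derivative 1) (at y)"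
      by (auto intro!: derivative_eq_intros)
    from DERIV_chain2[where g = "\<lambda>y'. X (lv m0) m0 + y'", OF outer inner]
    show ?thesis unfolding J_upd by simp
  qed
  moreover have "continuous (at (0, 0)) (\<lambda>z. P (fst z) (snd z))"
  proof -
    have "continuous_on UNIV (\<lambda>z::real \<times> real. if m = m0 then snd z else fst z * w m)" for m
      by (cases "m = m0") (auto intro!: continuous_intros)
    then have "continuous_on UNIV (\<lambda>z::real \<times> real. J (fst z) (snd z))"
      unfolding J_def by (rule continuous_on_jet_add)
    from continuous_on_pdx_comp[OF g this] show ?thesis
      unfolding P_def by (simp add: continuous_on_eq_continuous_at)
  qed
  ultimately have "((\<lambda>h. g (J h (h * w m0)) t) has_real_derivative D + w m0 * P 0 0) (at 0)"
    by (rule DERIV_diagonal_from_partials)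
  moreover have "J h (h * w m0) = jet_add X (insert m0 M) lv (\<lambda>m. h * w m)" for h
    unfolding J_def by (rule arg_cong[where f = "jet_add X (insert m0 M) lv"]) auto
  moreover have "J 0 0 = X" unfolding J_def jet_add_def by (simp add: fun_eq_iff)
  ultimately show ?thesis by (simp add: P_def)
qed

lemma DERIV_jet_add_line:
  assumes "finite M" and "smoothC (Suc 0) g"
  shows "((\<lambda>h. g (jet_add X M lv (\<lambda>m. h * w m)) t) has_real_derivative
      (\<Sum>m\<in>M. w m * pdx g m (lv m) X t)) (at 0)"
  using \<open>finite M\<close>
proof (induction M rule: finite_induct)
  case empty
  then show ?case by (simp add: jet_add_def)
next
  case (insert m0 M)
  from DERIV_jet_add_line_insert[OF \<open>smoothC (Suc 0) g\<close> insert(2,3)] insert(1,2)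
  show ?case by (simp add: add.commute)
qed

section \<open>The transformed DAE\<close>

lemma Vsub_jupd:
  "Vsub V q (jupd Y L j s) = jet_add (Vsub V q Y) {m. q m \<le> q j \<and> q j \<le> L + q m} (\<lambda>m. L + q m - q j)
     (\<lambda>m. (s - Y L j) * V$m$j)"
proof (intro ext)
  fix l m
  have "(if q m \<le> q j' then V$m$j' * jupd Y L j s (q j' - q m + l) j' else 0)
    = (if q m \<le> q j' then V$m$j' * Y (q j' - q m + l) j' else 0)
      + (if j' = j then if q m \<le> q j \<and> q j \<le> L + q m \<and> l = L + q m - q j
          then (s - Y L j) * V$m$j else 0 else 0)"
    for j'
    by (auto simp: jupd_apply algebra_simps)
  then show "Vsub V q (jupd Y L j s) l m = jet_add (Vsub V q Y) {m. q m \<le> q j \<and> q j \<le> L + q m}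
      (\<lambda>m. L + q m - q j) (\<lambda>m. (s - Y L j) * V$m$j) l m"
    unfolding Vsub_def jet_add_def by (simp add: sum.distrib)
qed

lemma jet_orders_le_comp_Vsub:
  fixes g :: "'n::finite jet_fun"
  assumes "jet_orders_le g (\<lambda>m. int (q m) - c)"
  shows "jet_orders_le (\<lambda>Y t. g (Vsub V q Y) t) (\<lambda>j. int (q j) - c)"
  unfolding jet_orders_le_def jet_indep_def
proof (intro allI impI)
  fix j l Y t s assume "int (q j) - c < int l"
  then have "\<forall>m\<in>{m. q m \<le> q j \<and> q j \<le> l + q m}. jet_indep g m (l + q m - q j)"
    using assms unfolding jet_orders_le_def by auto
  then show "g (Vsub V q (jupd Y l j s)) t = g (Vsub V q Y) t"
    unfolding Vsub_jupd by (rule jet_add_jet_indep[OF finite])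
qed

lemma is_DAE_smoothC1: "is_DAE k f \<Longrightarrow> smoothC (Suc 0) (f a)"
  unfolding is_DAE_def smooth_jet_def by blast

lemma jet_orders_le_if_DP_feasible:
  assumes "is_DAE k f" and "DP_feasible f p q"
  shows "jet_orders_le (f a) (\<lambda>m. int (q m) - int (p a))"
  using assms unfolding DP_feasible_def
  by (intro jet_orders_le_if_sigma_le is_DAE_smoothC1) auto

lemma DERIV_comp_Vsub_leading:
  assumes dae: "is_DAE k f" and utV: "upper_tri_along V q" and "p a \<le> q j"
  shows "((\<lambda>s. f a (Vsub V q (jupd Y (q j - p a) j s)) t) has_real_derivative
      (\<Sum>b\<in>UNIV. V$b$j * sys_jacobian f p q a b (Vsub V q Y) t)) (at (Y (q j - p a) j))"
proof -
  define L where "L = q j - p a"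
  define M where "M = {m. q m \<le> q j \<and> q j \<le> L + q m}"
  define lv where "lv m = L + q m - q j" for m
  have outer: "((\<lambda>h. f a (jet_add (Vsub V q Y) M lv (\<lambda>m. h * V$m$j)) t) has_real_derivative
      (\<Sum>m\<in>M. V$m$j * pdx (f a) m (lv m) (Vsub V q Y) t)) (at (Y L j - Y L j))"
    using DERIV_jet_add_line[OF finite is_DAE_smoothC1[OF dae]] by simp
  have inner: "((\<lambda>s. s - Y L j) has_real_derivative 1) (at (Y L j))"
    by (auto intro!: derivative_eq_intros)
  from DERIV_chain2[OF outer inner]
  have "((\<lambda>s. f a (Vsub V q (jupd Y L j s)) t) has_real_derivative
      (\<Sum>m\<in>M. V$m$j * pdx (f a) m (lv m) (Vsub V q Y) t)) (at (Y L j))"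
    unfolding Vsub_jupd M_def lv_def by simp
  moreover have "V$b$j * sys_jacobian f p q a b (Vsub V q Y) t
      = (if b \<in> M then V$b$j * pdx (f a) b (lv b) (Vsub V q Y) t else 0)" for b
    using utV \<open>p a \<le> q j\<close> unfolding M_def lv_def L_def sys_jacobian_def upper_tri_along_def
    by (auto simp: not_le)
  ultimately show ?thesis unfolding L_def by (simp add: sum.If_cases)
qed

lemma jet_orders_le_transformed_DAE:
  assumes "is_DAE k f" and "DP_feasible f p q"
  shows "jet_orders_le (transformed_DAE k f U V p q i) (\<lambda>j. int (q j) - int (p i))"
  unfolding jet_orders_le_def
proof (intro allI impI)
  fix j l assume l: "int (q j) - int (p i) < int l"
  have "jet_indep (Dtpow (k + Max (range q)) (p a - p i) (\<lambda>Y t. f a (Vsub V q Y) t)) j l"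
    if "p i \<le> p a" for a
  proof -
    have "jet_orders_le (\<lambda>Y t. f a (Vsub V q Y) t) (\<lambda>m. int (q m) - int (p a))"
      using jet_orders_le_if_DP_feasible[OF assms] by (rule jet_orders_le_comp_Vsub)
    from jet_orders_le_Dtpow[OF this] show ?thesis
      using l that unfolding jet_orders_le_def by (simp add: of_nat_diff)
  qed
  then show "jet_indep (transformed_DAE k f U V p q i) j l"
    unfolding jet_indep_def transformed_DAE_def by (auto intro!: sum.cong)
qed

lemma DP_feasible_transformed_DAE:
  assumes "is_DAE k f" and "DP_feasible f p q"
  shows "DP_feasible (transformed_DAE k f U V p q) p q"
  unfolding DP_feasible_def
proof (intro allI)
  fix i j
  show "sigma (transformed_DAE k f U V p q) i j \<le> ereal (real_of_int (int (q j) - int (p i)))"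
    using jet_orders_le_transformed_DAE[OF assms]
      sigma_le_if_jet_orders_le[of "transformed_DAE k f U V p q" i "\<lambda>j. int (q j) - int (p i)" j]
    by blast
qed

lemma fmat_mult3_sys_jacobian_triangular:
  assumes utU: "upper_tri_along U p" and utV: "upper_tri_along V q"
  shows "fmat_mult3 U (sys_jacobian f p q) V i j Y t
    = (\<Sum>a\<in>UNIV. if p i \<le> p a \<and> p a \<le> q j
         then U$i$a * (\<Sum>b\<in>UNIV. V$b$j * sys_jacobian f p q a b Y t) else 0)"
  unfolding fmat_mult3_def
proof (rule sum.cong[OF refl])
  fix a
  show "(\<Sum>b\<in>UNIV. U$i$a * sys_jacobian f p q a b Y t * V$b$j)
    = (if p i \<le> p a \<and> p a \<le> q j then U$i$a * (\<Sum>b\<in>UNIV. V$b$j * sys_jacobian f p q a b Y t) else 0)"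
  proof (cases "p i \<le> p a \<and> p a \<le> q j")
    case True
    then show ?thesis by (simp add: sum_distrib_left algebra_simps)
  next
    case False
    then have "U$i$a * sys_jacobian f p q a b Y t * V$b$j = 0" for b
      using utU utV unfolding upper_tri_along_def sys_jacobian_def by (auto simp: not_le)
    then have "(\<Sum>b\<in>UNIV. U$i$a * sys_jacobian f p q a b Y t * V$b$j) = 0"
      by (simp only: sum.neutral_const)
    with False show ?thesis by (simp only: if_False)
  qed
qed

lemma DERIV_Dtpow_comp_Vsub_leading:
  assumes dae: "is_DAE k f" and fe: "DP_feasible f p q" and utV: "upper_tri_along V q"
    and "p i \<le> p a" and "p i \<le> q j"
  shows "((\<lambda>s. Dtpow (k + Max (range q)) (p a - p i) (\<lambda>Y t. f a (Vsub V q Y) t)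
            (jupd Y (q j - p i) j s) t)
      has_real_derivative (if p a \<le> q j then \<Sum>b\<in>UNIV. V$b$j * sys_jacobian f p q a b (Vsub V q Y) t else 0))
      (at (Y (q j - p i) j))"
proof -
  have orders: "jet_orders_le (\<lambda>Y t. f a (Vsub V q Y) t) (\<lambda>m. int (q m) - int (p a))"
    using jet_orders_le_if_DP_feasible[OF dae fe] by (rule jet_orders_le_comp_Vsub)
  show ?thesis
  proof (cases "p a \<le> q j")
    case True
    have "q j \<le> Max (range q)" by simp
    then have "q j - p a \<le> k + Max (range q)" by linarith
    from Dtpow_leading_deriv[OF orders _ this
        DERIV_comp_Vsub_leading[where a = a and p = p, OF dae utV True], where r = "p a - p i"]
    show ?thesis using True \<open>p i \<le> p a\<close> by simp
  next
    case False
    then have "jet_indep (\<lambda>Y t. f a (Vsub V q Y) t) j l" for l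
      using orders unfolding jet_orders_le_def by simp
    then have "jet_indep (Dtpow (k + Max (range q)) (p a - p i) (\<lambda>Y t. f a (Vsub V q Y) t)) j (q j - p i)"
      by (rule jet_indep_Dtpow)
    then show ?thesis using False unfolding jet_indep_def by simp
  qed
qed

lemma pdx_transformed_DAE:
  assumes dae: "is_DAE k f" and fe: "DP_feasible f p q"
    and utU: "upper_tri_along U p" and utV: "upper_tri_along V q" and "p i \<le> q j"
  shows "pdx (transformed_DAE k f U V p q i) j (q j - p i) Y t
    = fmat_mult3 U (sys_jacobian f p q) V i j (Vsub V q Y) t"
proof -
  have "((\<lambda>s. transformed_DAE k f U V p q i (jupd Y (q j - p i) j s) t) has_real_derivative
      (\<Sum>a\<in>UNIV. if p i \<le> p a then U$i$a * (if p a \<le> q j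
         then \<Sum>b\<in>UNIV. V$b$j * sys_jacobian f p q a b (Vsub V q Y) t else 0) else 0))
      (at (Y (q j - p i) j))"
    unfolding transformed_DAE_def
    using DERIV_Dtpow_comp_Vsub_leading[OF dae fe utV _ \<open>p i \<le> q j\<close>]
    by (intro DERIV_sum) (auto intro!: derivative_eq_intros)
  then show ?thesis
    unfolding pdx_def fmat_mult3_sys_jacobian_triangular[OF utU utV]
    by (auto dest!: DERIV_imp_deriv intro!: sum.cong)
qed

lemma fmat_mult3_nonzero_if_DP_tight:
  assumes "is_DAE k f" and "DP_feasible f p q"
    and "upper_tri_along U p" and "upper_tri_along V q"
    and tight: "DP_tight (transformed_DAE k f U V p q) p q i j"
  shows "fmat_mult3 U (sys_jacobian f p q) V i j \<noteq> (\<lambda>_ _. 0)"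
proof
  assume zero: "fmat_mult3 U (sys_jacobian f p q) V i j = (\<lambda>_ _. 0)"
  have "p i \<le> q j" using tight by (rule DP_tight_imp_pdx_nonzero)
  have "pdx (transformed_DAE k f U V p q i) j (q j - p i) = (\<lambda>_ _. 0)"
    using pdx_transformed_DAE[OF assms(1-4) \<open>p i \<le> q j\<close>] zero by (simp add: fun_eq_iff)
  with DP_tight_imp_pdx_nonzero(2)[OF tight] show False by simp
qed

theorem theorem4:
  fixes f :: "'n::finite \<Rightarrow> 'n jet_fun" and k :: nat
    and p q :: "'n \<Rightarrow> nat" and U V :: "real^'n^'n"
  assumes "is_DAE k f"
    and "delta_hat f \<noteq> -\<infinity>"
    and "DP_optimal f p q"
    and "invertible U" and "invertible V"
    and "trank (fmat_mult3 U (sys_jacobian f p q) V) < CARD('n)"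
    and "upper_tri_along U p" and "upper_tri_along V q"
  shows "delta_hat (transformed_DAE k f U V p q) < delta_hat f"
proof -
  have fe: "DP_feasible f p q" using assms(3) unfolding DP_optimal_def by blast
  have "\<not> DP_optimal (transformed_DAE k f U V p q) p q"
  proof
    assume "DP_optimal (transformed_DAE k f U V p q) p q"
    then obtain \<pi> where "inj \<pi>" and "\<And>i. DP_tight (transformed_DAE k f U V p q) p q i (\<pi> i)"
      using DP_optimal_imp_tight_perfect_matching by metis
    then have "CARD('n) \<le> trank (fmat_mult3 U (sys_jacobian f p q) V)"
      using fmat_mult3_nonzero_if_DP_tight[OF assms(1) fe assms(7,8)] by (blast intro: CARD_le_trank)
    with assms(6) show False by simp
  qed
  with DP_feasible_transformed_DAE[OF assms(1) fe]
  have "delta_hat (transformed_DAE k f U V p q) < ereal (real_of_int (DP_obj p q))"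
    by (rule delta_hat_less_DP_obj)
  then show ?thesis unfolding delta_hat_eq_DP_obj[OF assms(3)] .
qed

end
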